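(* Let $K$ be a Henselian valued field and $f(x)=\sum_{i=0}^d a_ix^i$ a nonzero polynomial with coefficients in $K$. Let $N$ be a positive integer and $\xi\in\mathrm{RV}_N^\times$. Suppose that \[\mathrm{ord}\Big(\sum_{i=1}^d\mathrm{rv}_N(ia_i)\xi^{i-1}\Big)\le\min_{1\le i\le d}\mathrm{ord}(a_i\xi^{i-1})+\mathrm{ord}\,N,\] and that there exists $\tilde\xi\in\mathrm{RV}_{N^2}$ with $\mathrm{rv}_N(\tilde\xi)=\xi$ and \[0\in\sum_{i=0}^d\mathrm{rv}_{N^2}(a_i)\tilde\xi^i.\] Then there exists a unique $x_0\in K$ with $\mathrm{rv}_N(x_0)=\xi$ and $f(x_0)=0$.
   Context: For a valued field $K$ with valuation ring $\mathcal{O}_K$, maximal ideal $\mathcal{M}_K$, additive value group $\Gamma$ and valuation $\mathrm{ord}\colon K^\times\to\Gamma$ (with $\mathrm{ord}\,0=\infty$), and a positive integer $N$: $\mathrm{RV}_N^\times=K^\times/(1+N\mathcal{M}_K)$ (a multiplicative group), $\mathrm{RV}_N=\mathrm{RV}_N^\times\cup\{0\}$ with multiplication extended by $0$, $\mathrm{rv}_N\colon K\to\mathrm{RV}_N$ the projection with $\mathrm{rv}_N(0)=0$, and for $N\mid M$ the induced map $\mathrm{rv}_N\colon\mathrm{RV}_M\to\mathrm{RV}_N$. The valuation factors through $\mathrm{ord}\colon\mathrm{RV}_N^\times\to\Gamma$. For $\xi_0,\dots,\xi_d\in\mathrm{RV}_N$, $\sum_{i}\xi_i$ denotes the set $\{\mathrm{rv}_N(x_0+\dots+x_d)\mid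 x_i\in K,\ \mathrm{rv}_N(x_i)=\xi_i\}\subseteq\mathrm{RV}_N$. For $A\subseteq\mathrm{RV}_N$ and $\delta\in\Gamma$, $\mathrm{ord}(A)\le\delta$ means $\mathrm{ord}(x)\le\delta$ for all $x\in A$. *)

theory Defs
  imports "HOL-Computational_Algebra.Polynomial" "HOL-Library.Extended"
begin

(* A (Krull) valuation on a field 'a with values in an ordered abelian group 'g.
   v is only meaningful on nonzero elements; ord 0 = infinity is modelled by vord below. *)
definition valuation :: "('a::field \<Rightarrow> 'g::linordered_ab_group_add) \<Rightarrow> bool" where
  "valuation v \<longleftrightarrow>
     (\<forall>x y. x \<noteq> 0 \<longrightarrow> y \<noteq> 0 \<longrightarrow> v (x * y) = v x + v y) \<and>
     (\<forall>x y. x \<noteq> 0 \<longrightarrow> y \<noteq> 0 \<longrightarrow> x + y \<noteq> 0 \<longrightarrow> min (v x) (v y) \<le> v (x + y))"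

definition valring :: "('a::field \<Rightarrow> 'g::linordered_ab_group_add) \<Rightarrow> 'a set" where
  "valring v = {x. x = 0 \<or> 0 \<le> v x}"

definition maxideal :: "('a::field \<Rightarrow> 'g::linordered_ab_group_add) \<Rightarrow> 'a set" where
  "maxideal v = {x. x = 0 \<or> 0 < v x}"

definition vord :: "('a::field \<Rightarrow> 'g::linordered_ab_group_add) \<Rightarrow> 'a \<Rightarrow> 'g extended" where
  "vord v x = (if x = 0 then Pinf else Fin (v x))"

definition henselian :: "('a::field \<Rightarrow> 'g::linordered_ab_group_add) \<Rightarrow> bool" where
  "henselian v \<longleftrightarrow>
     (\<forall>f :: 'a poly. \<forall>a. (\<forall>i. coeff f i \<in> valring v) \<longrightarrow> a \<in> valring v \<longrightarrow>
        poly f a \<in> maxideal v \<longrightarrow> poly (pderiv f) a \<notin> maxideal v \<longrightarrow>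
        (\<exists>b \<in> valring v. poly f b = 0 \<and> b - a \<in> maxideal v))"

definition henselian_valued_field :: "('a::field \<Rightarrow> 'g::linordered_ab_group_add) \<Rightarrow> bool" where
  "henselian_valued_field v \<longleftrightarrow> valuation v \<and> henselian v"

(* rv_N(x): the class of x in RV_N = K^x/(1 + N M_K) \<union> {0}, as a subset of K *)
definition rv :: "('a::field \<Rightarrow> 'g::linordered_ab_group_add) \<Rightarrow> nat \<Rightarrow> 'a \<Rightarrow> 'a set" where
  "rv v N x = (if x = 0 then {0}
               else {x * (1 + of_nat N * m) | m. m \<in> maxideal v})"

definition RV :: "('a::field \<Rightarrow> 'g::linordered_ab_group_add) \<Rightarrow> nat \<Rightarrow> 'a set set" where
  "RV v N = range (rv v N)"

definition RVx :: "('a::field \<Rightarrow> 'g::linordered_ab_group_add) \<Rightarrow> nat \<Rightarrow> 'a set set" where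
  "RVx v N = RV v N - {{0}}"

definition rv_mul :: "'a::field set \<Rightarrow> 'a set \<Rightarrow> 'a set" where
  "rv_mul A B = {x * y | x y. x \<in> A \<and> y \<in> B}"

primrec rv_pow :: "('a::field \<Rightarrow> 'g::linordered_ab_group_add) \<Rightarrow> nat \<Rightarrow> 'a set \<Rightarrow> nat \<Rightarrow> 'a set" where
  "rv_pow v N A 0 = rv v N 1"
| "rv_pow v N A (Suc n) = rv_mul A (rv_pow v N A n)"

(* induced map rv_N : RV_M \<rightarrow> RV_N (for N dvd M) *)
definition rv_res :: "('a::field \<Rightarrow> 'g::linordered_ab_group_add) \<Rightarrow> nat \<Rightarrow> 'a set \<Rightarrow> 'a set" where
  "rv_res v N A = rv v N (SOME x. x \<in> A)"

definition rv_ord :: "('a::field \<Rightarrow> 'g::linordered_ab_group_add) \<Rightarrow> 'a set \<Rightarrow> 'g extended" where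
  "rv_ord v A = vord v (SOME x. x \<in> A)"

definition rv_sum :: "('a::field \<Rightarrow> 'g::linordered_ab_group_add) \<Rightarrow> nat \<Rightarrow> nat set \<Rightarrow> (nat \<Rightarrow> 'a set) \<Rightarrow> 'a set set" where
  "rv_sum v N I \<xi> = {rv v N (\<Sum>i\<in>I. x i) | x. \<forall>i\<in>I. rv v N (x i) = \<xi> i}"

end

theory Submission
  imports Defs
begin

(*
  Let t in K represent the given lift of xi to RV_{N^2}. The hypothesis on the RV_{N^2}-sum gives
  units 1 + N^2 m_i (m_i in M_K) with sum_i a_i t^i (1 + N^2 m_i) = 0, so f(t) = -N^2 sum_i a_i t^i m_i.
  The class xi consists of the elements t (1 + N z) with z in M_K, and we rescale

      h(z) = f(t (1 + N z)) / (N t f'(t)).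

  The bound on ord (sum_i rv_N(i a_i) xi^(i-1)) says that the weights a_i t^i N / (t f'(t)) are integral
  for i >= 1, hence also for i = 0, as the sum of the weights times units vanishes. So h has integral
  coefficients, h(0) in M_K and h'(0) = 1; Hensel's lemma gives a root z in M_K, and it is the only one
  there because h(z) - h(b) = (z - b) (1 + element of M_K) for z, b in M_K. If N = 0 in K, then rv_N is
  injective and t itself is the unique root.
*)

locale valued_field =
  fixes v :: "'a::field \<Rightarrow> 'g::linordered_ab_group_add"
  assumes valuation: "valuation v"
begin

lemma v_mult: "x \<noteq> 0 \<Longrightarrow> y \<noteq> 0 \<Longrightarrow> v (x * y) = v x + v y"
  using valuation unfolding valuation_def by blast

lemma v_add: "x \<noteq> 0 \<Longrightarrow> y \<noteq> 0 \<Longrightarrow> x + y \<noteq> 0 \<Longrightarrow> min (v x) (v y) \<le> v (x + y)"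
  using valuation unfolding valuation_def by blast

lemma v_one [simp]: "v 1 = 0"
  using v_mult[of 1 1] by simp

lemma v_minus [simp]: "v (- x) = v x"
proof -
  have "v (-1) = 0"
    using v_mult[of "-1" "-1"] by simp
  then show ?thesis
    using v_mult[of "-1" x] by (cases "x = 0") auto
qed

lemma vord_mult: "vord v (x * y) = vord v x + vord v y"
  by (simp add: vord_def v_mult)

lemma divide_in_valring_iff: "x \<noteq> 0 \<Longrightarrow> y / x \<in> valring v \<longleftrightarrow> vord v x \<le> vord v y"
  using v_mult[of "y / x" x] by (auto simp: valring_def vord_def)

lemma zero_in_valring [simp]: "0 \<in> valring v"
  and one_in_valring [simp]: "1 \<in> valring v"
  and zero_in_maxideal [simp]: "0 \<in> maxideal v"
  and one_notin_maxideal [simp]: "1 \<notin> maxideal v"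
  by (simp_all add: valring_def maxideal_def)

lemma maxideal_subset_valring: "x \<in> maxideal v \<Longrightarrow> x \<in> valring v"
  by (auto simp: valring_def maxideal_def)

lemma valring_add:
  assumes "x \<in> valring v" "y \<in> valring v"
  shows "x + y \<in> valring v"
proof (cases "x = 0 \<or> y = 0 \<or> x + y = 0")
  case False
  with assms have "0 \<le> min (v x) (v y)"
    by (simp add: valring_def)
  also have "\<dots> \<le> v (x + y)"
    using False by (simp add: v_add)
  finally show ?thesis
    by (simp add: valring_def)
qed (use assms in auto)

lemma maxideal_add:
  assumes "x \<in> maxideal v" "y \<in> maxideal v"
  shows "x + y \<in> maxideal v"
proof (cases "x = 0 \<or> y = 0 \<or> x + y = 0")
  case False
  with assms have "0 < min (v x) (v y)"
    by (simp add: maxideal_def)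
  also have "\<dots> \<le> v (x + y)"
    using False by (simp add: v_add)
  finally show ?thesis
    by (simp add: maxideal_def)
qed (use assms in auto)

lemma valring_uminus: "x \<in> valring v \<Longrightarrow> - x \<in> valring v"
  and maxideal_uminus: "x \<in> maxideal v \<Longrightarrow> - x \<in> maxideal v"
  by (simp_all add: valring_def maxideal_def)

lemma maxideal_diff: "x \<in> maxideal v \<Longrightarrow> y \<in> maxideal v \<Longrightarrow> x - y \<in> maxideal v"
  using maxideal_add[of x "- y"] maxideal_uminus[of y] by simp

lemma valring_mult: "x \<in> valring v \<Longrightarrow> y \<in> valring v \<Longrightarrow> x * y \<in> valring v"
  by (cases "x = 0 \<or> y = 0") (auto simp: valring_def v_mult)

lemma maxideal_mult: "x \<in> valring v \<Longrightarrow> y \<in> maxideal v \<Longrightarrow> x * y \<in> maxideal v"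
  by (cases "x = 0 \<or> y = 0") (auto simp: valring_def maxideal_def v_mult add_nonneg_pos)

lemma valring_sum: "(\<And>i. i \<in> I \<Longrightarrow> f i \<in> valring v) \<Longrightarrow> sum f I \<in> valring v"
  by (induction I rule: infinite_finite_induct) (auto intro: valring_add)

lemma maxideal_sum: "(\<And>i. i \<in> I \<Longrightarrow> f i \<in> maxideal v) \<Longrightarrow> sum f I \<in> maxideal v"
  by (induction I rule: infinite_finite_induct) (auto intro: maxideal_add)

lemma of_nat_in_valring: "of_nat n \<in> valring v"
  by (induction n) (auto intro: valring_add)

lemma valring_power: "x \<in> valring v \<Longrightarrow> x ^ k \<in> valring v"
  by (induction k) (auto intro: valring_mult)

lemma maxideal_power:
  assumes "x \<in> maxideal v" "k \<ge> 1"
  shows "x ^ k \<in> maxideal v"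
proof -
  obtain j where "k = Suc j"
    using assms(2) by (cases k) auto
  then show ?thesis
    using maxideal_mult[OF valring_power[OF maxideal_subset_valring[OF assms(1)]] assms(1), of j]
    by (simp add: mult.commute)
qed

lemma one_plus_maxideal:
  assumes "m \<in> maxideal v"
  shows "1 + m \<noteq> 0" and "v (1 + m) = 0"
proof -
  show nonzero: "1 + m \<noteq> 0"
  proof
    assume "1 + m = 0"
    then have "1 = - m"
      by (simp add: eq_neg_iff_add_eq_0)
    then show False
      using maxideal_uminus[OF assms] by simp
  qed
  have "1 + m \<in> valring v"
    using assms by (simp add: valring_add maxideal_subset_valring)
  then have "0 \<le> v (1 + m)"
    using nonzero by (simp add: valring_def)
  moreover have "1 + m \<notin> maxideal v"
    using assms maxideal_diff[of "1 + m" m] by auto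
  then have "\<not> 0 < v (1 + m)"
    by (simp add: maxideal_def)
  ultimately show "v (1 + m) = 0"
    by simp
qed

lemma valring_cancel_one_plus_maxideal:
  assumes "m \<in> maxideal v" "x * (1 + m) \<in> valring v"
  shows "x \<in> valring v"
proof (cases "x = 0")
  case False
  with assms have "v (x * (1 + m)) = v x"
    using v_mult one_plus_maxideal by simp
  with assms False show ?thesis
    using one_plus_maxideal(1) by (auto simp: valring_def)
qed simp

end

definition rv_kernel :: "('a::field \<Rightarrow> 'g::linordered_ab_group_add) \<Rightarrow> nat \<Rightarrow> 'a set" where
  "rv_kernel v N = {1 + of_nat N * m | m. m \<in> maxideal v}"

lemma one_in_rv_kernel: "1 \<in> rv_kernel v N"
  unfolding rv_kernel_def maxideal_def by force

lemma rv_eq_image: "rv v N x = (\<lambda>u. x * u) ` rv_kernel v N"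
proof (cases "x = 0")
  case True
  then show ?thesis
    using one_in_rv_kernel[of v N] by (auto simp: rv_def image_constant_conv)
qed (auto simp: rv_def rv_kernel_def)

lemma rv_self_mem: "x \<in> rv v N x"
  unfolding rv_eq_image using one_in_rv_kernel by force

lemma rv_of_nat_eq_0: "of_nat N = (0::'a::field) \<Longrightarrow> rv v N x = {x :: 'a}"
  unfolding rv_eq_image rv_kernel_def maxideal_def by auto

lemma rv_sum_memI: "rv v N (\<Sum>i\<in>I. c i) \<in> rv_sum v N I (\<lambda>i. rv v N (c i))"
  unfolding rv_sum_def by blast

context valued_field
begin

lemma rv_kernel_elem:
  assumes "m \<in> maxideal v"
  shows "1 + of_nat N * m \<in> rv_kernel v N"
  using assms unfolding rv_kernel_def by blast

lemma rv_kernel_nonzero: "u \<in> rv_kernel v N \<Longrightarrow> u \<noteq> 0"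
  and v_rv_kernel: "u \<in> rv_kernel v N \<Longrightarrow> v u = 0"
  unfolding rv_kernel_def using one_plus_maxideal maxideal_mult[OF of_nat_in_valring] by auto

lemma rv_kernel_mult:
  assumes "u \<in> rv_kernel v N" "w \<in> rv_kernel v N"
  shows "u * w \<in> rv_kernel v N"
proof -
  obtain m m' where m: "m \<in> maxideal v" "u = 1 + of_nat N * m"
    and m': "m' \<in> maxideal v" "w = 1 + of_nat N * m'"
    using assms unfolding rv_kernel_def by blast
  then have "u * w = 1 + of_nat N * (m + m' + of_nat N * m * m')"
    by (simp add: algebra_simps)
  moreover have "m + m' + of_nat N * m * m' \<in> maxideal v"
    using m m' by (intro maxideal_add maxideal_mult valring_mult of_nat_in_valring maxideal_subset_valring)
  ultimately show ?thesis
    by (simp add: rv_kernel_elem)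
qed

lemma rv_kernel_divide:
  assumes "u \<in> rv_kernel v N" "w \<in> rv_kernel v N"
  shows "w / u \<in> rv_kernel v N"
proof -
  obtain m m' where m: "m \<in> maxideal v" "u = 1 + of_nat N * m"
    and m': "m' \<in> maxideal v" "w = 1 + of_nat N * m'"
    using assms unfolding rv_kernel_def by blast
  have "u \<noteq> 0"
    using assms(1) by (rule rv_kernel_nonzero)
  then have "w / u = 1 + of_nat N * ((m' - m) / u)"
    using m m' by (simp add: field_simps)
  moreover have "inverse u \<in> valring v"
    using divide_in_valring_iff[OF \<open>u \<noteq> 0\<close>, of 1] v_rv_kernel[OF assms(1)] \<open>u \<noteq> 0\<close>
    by (simp add: vord_def divide_inverse)
  then have "inverse u * (m' - m) \<in> maxideal v"
    using m(1) m'(1) by (simp add: maxideal_mult maxideal_diff)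
  then have "(m' - m) / u \<in> maxideal v"
    by (simp add: divide_inverse mult.commute)
  ultimately show ?thesis
    by (metis rv_kernel_elem)
qed

lemma rv_kernel_mono:
  assumes "N dvd M"
  shows "rv_kernel v M \<subseteq> rv_kernel v N"
proof
  fix u
  assume "u \<in> rv_kernel v M"
  then obtain m where m: "m \<in> maxideal v" "u = 1 + of_nat M * m"
    unfolding rv_kernel_def by blast
  obtain k where "M = N * k"
    using assms by blast
  then have "u = 1 + of_nat N * (of_nat k * m)"
    using m(2) by (simp add: mult.assoc)
  moreover have "1 + of_nat N * (of_nat k * m) \<in> rv_kernel v N"
    using m(1) by (simp add: rv_kernel_elem maxideal_mult of_nat_in_valring)
  ultimately show "u \<in> rv_kernel v N"
    by simp
qed

lemma rv_eq_iff: "rv v N x = rv v N y \<longleftrightarrow> y \<in> rv v N x"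
proof
  assume "rv v N x = rv v N y"
  then show "y \<in> rv v N x"
    using rv_self_mem by simp
next
  assume "y \<in> rv v N x"
  then obtain u where u: "u \<in> rv_kernel v N" "y = x * u"
    by (auto simp: rv_eq_image)
  have kernel_invariant: "(\<lambda>w. u * w) ` rv_kernel v N = rv_kernel v N"
  proof
    show "(\<lambda>w. u * w) ` rv_kernel v N \<subseteq> rv_kernel v N"
      using u(1) rv_kernel_mult by blast
    show "rv_kernel v N \<subseteq> (\<lambda>w. u * w) ` rv_kernel v N"
    proof
      fix w
      assume "w \<in> rv_kernel v N"
      then have "w / u \<in> rv_kernel v N" and "w = u * (w / u)"
        using u(1) rv_kernel_divide rv_kernel_nonzero by auto
      then show "w \<in> (\<lambda>w. u * w) ` rv_kernel v N"
        by blast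
    qed
  qed
  have "(\<lambda>w. x * u * w) ` rv_kernel v N = (\<lambda>w. x * w) ` ((\<lambda>w. u * w) ` rv_kernel v N)"
    by (simp add: image_image mult.assoc)
  then show "rv v N x = rv v N y"
    unfolding rv_eq_image u(2) kernel_invariant by simp
qed

lemma rv_eq_rv_iff: "rv v N x = rv v N t \<longleftrightarrow> (\<exists>z\<in>maxideal v. x = t * (1 + of_nat N * z))"
proof -
  have "rv v N x = rv v N t \<longleftrightarrow> x \<in> rv v N t"
    using rv_eq_iff[of N t x] by auto
  also have "\<dots> \<longleftrightarrow> (\<exists>z\<in>maxideal v. x = t * (1 + of_nat N * z))"
    by (auto simp: rv_eq_image rv_kernel_def)
  finally show ?thesis .
qed

lemma rv_eq_0_iff: "rv v N x = {0} \<longleftrightarrow> x = 0"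
  using rv_self_mem[of x v N] by (auto simp: rv_def)

lemma rv_mul_rv: "rv_mul (rv v N x) (rv v N y) = rv v N (x * y)"
proof -
  have "rv_mul (rv v N x) (rv v N y) \<subseteq> rv v N (x * y)"
    unfolding rv_mul_def rv_eq_image using rv_kernel_mult
    by (auto simp: image_iff)
  moreover have "rv v N (x * y) \<subseteq> rv_mul (rv v N x) (rv v N y)"
  proof
    fix z
    assume "z \<in> rv v N (x * y)"
    then obtain u where "u \<in> rv_kernel v N" "z = (x * u) * (y * 1)"
      by (auto simp: rv_eq_image mult_ac)
    then show "z \<in> rv_mul (rv v N x) (rv v N y)"
      unfolding rv_mul_def rv_eq_image using one_in_rv_kernel by blast
  qed
  ultimately show ?thesis
    by (rule antisym)
qed

lemma rv_pow_rv: "rv_pow v N (rv v N x) k = rv v N (x ^ k)"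
  by (induction k) (simp_all add: rv_mul_rv)

lemma rv_ord_rv: "rv_ord v (rv v N x) = vord v x"
proof -
  have "(SOME y. y \<in> rv v N x) \<in> rv v N x"
    using rv_self_mem by (rule someI)
  then obtain u where "u \<in> rv_kernel v N" "(SOME y. y \<in> rv v N x) = x * u"
    by (auto simp: rv_eq_image)
  then show ?thesis
    unfolding rv_ord_def by (simp add: vord_def v_mult v_rv_kernel rv_kernel_nonzero)
qed

lemma rv_res_rv:
  assumes "N dvd M"
  shows "rv_res v N (rv v M x) = rv v N x"
proof -
  have "(SOME y. y \<in> rv v M x) \<in> rv v M x"
    using rv_self_mem by (rule someI)
  also have "rv v M x \<subseteq> rv v N x"
    unfolding rv_eq_image using rv_kernel_mono[OF assms] by blast
  finally show ?thesis
    unfolding rv_res_def by (metis rv_eq_iff)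
qed

lemma zero_in_rv_sum_rv:
  assumes "{0} \<in> rv_sum v N I (\<lambda>i. rv v N (c i))"
  obtains m where "\<forall>i\<in>I. m i \<in> maxideal v" "(\<Sum>i\<in>I. c i * (1 + of_nat N * m i)) = 0"
proof -
  obtain y where y: "rv v N (\<Sum>i\<in>I. y i) = {0}" "\<forall>i\<in>I. rv v N (y i) = rv v N (c i)"
    using assms unfolding rv_sum_def by auto
  then have "\<forall>i\<in>I. \<exists>m\<in>maxideal v. y i = c i * (1 + of_nat N * m)"
    by (simp add: rv_eq_rv_iff)
  then obtain m where "\<forall>i\<in>I. m i \<in> maxideal v \<and> y i = c i * (1 + of_nat N * m i)"
    by metis
  moreover have "(\<Sum>i\<in>I. y i) = 0"
    using y(1) rv_eq_0_iff by blast
  ultimately show ?thesis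
    using that by (metis (no_types, lifting) sum.cong)
qed

end

lemma pcompose_as_sum:
  fixes p :: "'a::comm_semiring_1 poly"
  shows "p \<circ>\<^sub>p q = (\<Sum>i\<le>degree p. smult (coeff p i) (q ^ i))"
proof -
  have "p \<circ>\<^sub>p q = (\<Sum>i\<le>degree p. [:coeff p i:] * q ^ i)"
    unfolding pcompose_altdef poly_altdef by (simp add: degree_map_poly coeff_map_poly)
  then show ?thesis
    by simp
qed

lemma coeff_pcompose_scaled_linear:
  fixes p :: "'a::comm_semiring_1 poly"
  shows "coeff (p \<circ>\<^sub>p [:c, c * s:]) j = (\<Sum>i\<le>degree p. coeff p i * c ^ i * of_nat (i choose j)) * s ^ j"
proof -
  have power: "coeff ([:c, c * s:] ^ i) j = c ^ i * of_nat (i choose j) * s ^ j" for i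
  proof (cases "j \<le> i")
    case True
    then have "c ^ i = c ^ j * c ^ (i - j)"
      by (simp flip: power_add)
    then show ?thesis
      using True by (simp add: coeff_linear_poly_power power_mult_distrib algebra_simps)
  next
    case False
    have "degree ([:c, c * s:] ^ i) \<le> i"
      using degree_power_le[of "[:c, c * s:]" i] degree_pCons_le[of c "[:c * s:]"] by (simp add: order_trans)
    then show ?thesis
      using False by (simp add: coeff_eq_0 binomial_eq_0)
  qed
  have "coeff (p \<circ>\<^sub>p [:c, c * s:]) j = (\<Sum>i\<le>degree p. coeff p i * coeff ([:c, c * s:] ^ i) j)"
    unfolding pcompose_as_sum coeff_sum coeff_smult ..
  also have "\<dots> = (\<Sum>i\<le>degree p. coeff p i * c ^ i * of_nat (i choose j)) * s ^ j"
    unfolding power sum_distrib_right by (simp only: mult.assoc)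
  finally show ?thesis .
qed

lemma coeff_pcompose_scaled_linear_1:
  fixes p :: "'a::idom poly"
  shows "coeff (p \<circ>\<^sub>p [:c, c * s:]) 1 = poly (pderiv p) c * (c * s)"
proof -
  have "coeff (p \<circ>\<^sub>p [:c, c * s:]) 1 = poly (pderiv (p \<circ>\<^sub>p [:c, c * s:])) 0"
    by (simp add: poly_0_coeff_0 coeff_pderiv)
  also have "\<dots> = poly (pderiv p) c * poly (pderiv [:c, c * s:]) 0"
    unfolding pderiv_pcompose poly_mult poly_pcompose by simp
  also have "pderiv [:c, c * s:] = [:c * s:]"
    by (simp add: pderiv_pCons)
  finally show ?thesis
    by simp
qed

lemma poly_pderiv_altdef:
  fixes p :: "'a::idom poly"
  shows "poly (pderiv p) x = (\<Sum>i=1..degree p. of_nat i * coeff p i * x ^ (i - 1))"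
proof (cases "degree p = 0")
  case True
  then obtain a where "p = [:a:]"
    by (rule degree_eq_zeroE)
  then show ?thesis
    by (simp add: pderiv_pCons)
next
  case False
  have "degree (pderiv p) \<le> degree p - 1"
    by (simp add: degree_le coeff_pderiv coeff_eq_0)
  then have "poly (pderiv p) x = (\<Sum>k\<le>degree p - 1. coeff (pderiv p) k * x ^ k)"
    by (metis (no_types, lifting) poly_as_sum_of_monoms' poly_monom poly_sum sum.cong)
  also have "\<dots> = (\<Sum>k<degree p. coeff (pderiv p) k * x ^ k)"
    using False by (simp add: lessThan_Suc_atMost[symmetric])
  also have "\<dots> = (\<Sum>i=1..degree p. of_nat i * coeff p i * x ^ (i - 1))"
    unfolding One_nat_def sum.atLeast1_atMost_eq by (simp add: coeff_pderiv)
  finally show ?thesis .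
qed

definition rescaled_poly :: "'a::field poly \<Rightarrow> 'a \<Rightarrow> 'a \<Rightarrow> 'a poly" where
  "rescaled_poly f t n = smult (inverse (t * poly (pderiv f) t * n)) (f \<circ>\<^sub>p [:t, t * n:])"

lemma poly_rescaled_poly_eq_0_iff:
  "t * poly (pderiv f) t * n \<noteq> 0 \<Longrightarrow>
    poly (rescaled_poly f t n) z = 0 \<longleftrightarrow> poly f (t * (1 + n * z)) = 0"
  by (simp add: rescaled_poly_def poly_pcompose algebra_simps)

lemma coeff_rescaled_poly:
  "coeff (rescaled_poly f t n) j
    = (\<Sum>i\<le>degree f. coeff f i * t ^ i * of_nat (i choose j)) * n ^ j / (t * poly (pderiv f) t * n)"
  unfolding rescaled_poly_def coeff_smult coeff_pcompose_scaled_linear by (simp add: divide_inverse mult.commute)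

lemma coeff_rescaled_poly_1:
  "t * poly (pderiv f) t * n \<noteq> 0 \<Longrightarrow> coeff (rescaled_poly f t n) 1 = 1"
  unfolding rescaled_poly_def coeff_smult coeff_pcompose_scaled_linear_1 by (simp add: field_simps)

context valued_field
begin

lemma power_diff_quotient_mod_maxideal:
  assumes z: "z \<in> maxideal v" and b: "b \<in> maxideal v"
  shows "(\<Sum>k<j. b ^ (j - Suc k) * z ^ k) - (if j = 1 then 1 else 0) \<in> maxideal v"
proof -
  consider "j = 0" | "j = 1" | "j \<ge> 2"
    by linarith
  then show ?thesis
  proof cases
    case 3
    have "b ^ (j - Suc k) * z ^ k \<in> maxideal v" if "k < j" for k
    proof (cases "k = 0")
      case True
      then show ?thesis
        using maxideal_power[OF b, of "j - 1"] 3 by simp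
    next
      case False
      then show ?thesis
        using maxideal_mult[OF valring_power[OF maxideal_subset_valring[OF b]] maxideal_power[OF z]] by simp
    qed
    then have "(\<Sum>k<j. b ^ (j - Suc k) * z ^ k) \<in> maxideal v"
      by (intro maxideal_sum) simp
    then show ?thesis
      using 3 by simp
  qed simp_all
qed

lemma inj_on_poly_maxideal:
  assumes integral: "\<forall>i. coeff h i \<in> valring v" and unit: "coeff h 1 \<notin> maxideal v"
  shows "inj_on (poly h) (maxideal v)"
proof
  fix z b
  assume z: "z \<in> maxideal v" and b: "b \<in> maxideal v" and eq: "poly h z = poly h b"
  define P where "P j = (\<Sum>k<j. b ^ (j - Suc k) * z ^ k)" for j
  define W where "W = (\<Sum>j\<le>degree h. coeff h j * P j)"
  have "poly h z - poly h b = (\<Sum>j\<le>degree h. coeff h j * (z ^ j - b ^ j))"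
    by (simp add: poly_altdef sum_subtractf right_diff_distrib)
  also have "\<dots> = (z - b) * W"
    by (simp add: W_def P_def power_diff_sumr2 sum_distrib_left mult_ac)
  finally have factor: "(z - b) * W = 0"
    using eq by simp
  have P_near: "P j - (if j = 1 then 1 else 0) \<in> maxideal v" for j
    unfolding P_def using z b by (rule power_diff_quotient_mod_maxideal)
  have "coeff h 1 \<noteq> 0"
    using unit by auto
  then have "1 \<le> degree h"
    by (rule le_degree)
  then have "W - coeff h 1 = (\<Sum>j\<le>degree h. coeff h j * P j - (if j = 1 then coeff h j else 0))"
    by (simp add: W_def sum_subtractf)
  also have "\<dots> = (\<Sum>j\<le>degree h. coeff h j * (P j - (if j = 1 then 1 else 0)))"
    by (intro sum.cong) (simp_all add: right_diff_distrib)
  also have "\<dots> \<in> maxideal v"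
    using integral P_near by (simp add: maxideal_sum maxideal_mult)
  finally have "W \<notin> maxideal v"
    using unit maxideal_diff[of W "W - coeff h 1"] by auto
  then have "W \<noteq> 0"
    by auto
  then show "z = b"
    using factor by simp
qed

lemma henselian_unique_root_in_maxideal:
  assumes "henselian v" "\<forall>i. coeff h i \<in> valring v"
    and "poly h 0 \<in> maxideal v" "coeff h 1 \<notin> maxideal v"
  shows "\<exists>!b. b \<in> maxideal v \<and> poly h b = 0"
proof -
  have "poly (pderiv h) 0 = coeff h 1"
    by (simp add: poly_0_coeff_0 coeff_pderiv)
  then obtain b where "b \<in> maxideal v" "poly h b = 0"
    using assms zero_in_valring unfolding henselian_def by fastforce
  then show ?thesis
    using inj_onD[OF inj_on_poly_maxideal[OF assms(2,4)]] by auto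
qed

lemma valring_of_balanced_sum:
  assumes "finite I" "i \<in> I" "(\<Sum>j\<in>I. w j * (1 + \<mu> j)) = 0"
    and "\<forall>j\<in>I. \<mu> j \<in> maxideal v" "\<forall>j\<in>I - {i}. w j \<in> valring v"
  shows "w i \<in> valring v"
proof -
  have "w i * (1 + \<mu> i) = - (\<Sum>j\<in>I - {i}. w j * (1 + \<mu> j))"
    using assms(1-3) by (simp add: sum.remove eq_neg_iff_add_eq_0)
  also have "\<dots> \<in> valring v"
    using assms(4,5)
    by (intro valring_uminus valring_sum valring_mult valring_add) (auto intro: maxideal_subset_valring)
  finally show ?thesis
    using assms(2,4) valring_cancel_one_plus_maxideal by blast
qed

lemma degree_pos_of_approx_root:
  assumes "f \<noteq> 0" "\<forall>i\<le>degree f. \<mu> i \<in> maxideal v"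
    and "(\<Sum>i\<le>degree f. coeff f i * t ^ i * (1 + \<mu> i)) = 0"
  shows "degree f \<ge> 1"
proof (rule ccontr)
  assume "\<not> degree f \<ge> 1"
  then have "degree f = 0"
    by simp
  then have "coeff f 0 * (1 + \<mu> 0) = 0"
    using assms(3) by simp
  moreover have "coeff f 0 \<noteq> 0"
    using assms(1) \<open>degree f = 0\<close> leading_coeff_0_iff by metis
  ultimately show False
    using one_plus_maxideal(1) assms(2) \<open>degree f = 0\<close> by simp
qed

lemma approx_root_weights_in_valring:
  assumes "f \<noteq> 0" "t \<noteq> 0" "n \<noteq> 0" "n \<in> valring v"
    and m: "\<forall>i\<le>degree f. m i \<in> maxideal v"
    and approx_root: "(\<Sum>i\<le>degree f. coeff f i * t ^ i * (1 + n\<^sup>2 * m i)) = 0"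
    and pderiv_bound: "\<forall>i\<in>{1..degree f}.
      vord v (poly (pderiv f) t) \<le> vord v (coeff f i * t ^ (i - 1)) + vord v n"
  shows "poly (pderiv f) t \<noteq> 0"
    and "\<forall>i\<le>degree f. coeff f i * t ^ i * n / (t * poly (pderiv f) t) \<in> valring v"
proof -
  let ?d = "degree f" and ?D = "t * poly (pderiv f) t"
  have nm: "\<forall>i\<le>?d. n\<^sup>2 * m i \<in> maxideal v"
    using m by (simp add: maxideal_mult valring_power assms(4))
  have "?d \<ge> 1"
    using degree_pos_of_approx_root[OF assms(1) nm approx_root] .
  show S: "poly (pderiv f) t \<noteq> 0"
  proof
    assume "poly (pderiv f) t = 0"
    moreover have "vord v (poly (pderiv f) t) \<le> vord v (coeff f ?d * t ^ (?d - 1)) + vord v n"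
      using pderiv_bound \<open>?d \<ge> 1\<close> by simp
    moreover have "coeff f ?d * t ^ (?d - 1) \<noteq> 0"
      using assms(1,2) by simp
    ultimately show False
      using assms(2,3) by (simp add: vord_def)
  qed
  have upper: "coeff f i * t ^ i * n / ?D \<in> valring v" if "i \<in> {1..?d}" for i
  proof -
    have "t ^ i = t * t ^ (i - 1)"
      using that by (simp flip: power_Suc)
    then have "vord v (coeff f i * t ^ i * n) = vord v t + (vord v (coeff f i * t ^ (i - 1)) + vord v n)"
      by (simp add: vord_mult ac_simps)
    then have "vord v ?D \<le> vord v (coeff f i * t ^ i * n)"
      using pderiv_bound that by (simp add: vord_mult add_left_mono)
    then show ?thesis
      using S assms(2) by (simp add: divide_in_valring_iff)
  qed
  have "coeff f 0 * t ^ 0 * n / ?D \<in> valring v"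
  proof (rule valring_of_balanced_sum[where I = "{..?d}" and \<mu> = "\<lambda>i. n\<^sup>2 * m i"])
    have "(\<Sum>i\<le>?d. coeff f i * t ^ i * n / ?D * (1 + n\<^sup>2 * m i))
        = n / ?D * (\<Sum>i\<le>?d. coeff f i * t ^ i * (1 + n\<^sup>2 * m i))"
      by (simp add: sum_distrib_left mult_ac)
    then show "(\<Sum>i\<le>?d. coeff f i * t ^ i * n / ?D * (1 + n\<^sup>2 * m i)) = 0"
      using approx_root by simp
  qed (use nm upper in auto)
  with upper show "\<forall>i\<le>?d. coeff f i * t ^ i * n / ?D \<in> valring v"
    by (metis atLeastAtMost_iff less_one not_le power_0)
qed

lemma rescaled_poly_hensel_conditions:
  assumes "f \<noteq> 0" "t \<noteq> 0" "n \<noteq> 0" "n \<in> valring v"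
    and m: "\<forall>i\<le>degree f. m i \<in> maxideal v"
    and approx_root: "(\<Sum>i\<le>degree f. coeff f i * t ^ i * (1 + n\<^sup>2 * m i)) = 0"
    and pderiv_bound: "\<forall>i\<in>{1..degree f}.
      vord v (poly (pderiv f) t) \<le> vord v (coeff f i * t ^ (i - 1)) + vord v n"
  shows "\<forall>j. coeff (rescaled_poly f t n) j \<in> valring v"
    and "poly (rescaled_poly f t n) 0 \<in> maxideal v"
proof -
  let ?d = "degree f" and ?D = "t * poly (pderiv f) t" and ?h = "rescaled_poly f t n"
  define u where "u i = coeff f i * t ^ i * n / ?D" for i
  have "poly (pderiv f) t \<noteq> 0" and u: "\<forall>i\<le>?d. u i \<in> valring v"
    using approx_root_weights_in_valring[OF assms] by (simp_all add: u_def)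
  then have Dn: "?D * n \<noteq> 0"
    using assms(2,3) by simp
  have "poly f t + n\<^sup>2 * (\<Sum>i\<le>?d. coeff f i * t ^ i * m i)
      = (\<Sum>i\<le>?d. coeff f i * t ^ i * (1 + n\<^sup>2 * m i))"
    by (simp add: poly_altdef algebra_simps sum.distrib sum_distrib_left)
  then have "poly f t = - (n\<^sup>2 * (\<Sum>i\<le>?d. coeff f i * t ^ i * m i))"
    using approx_root by (simp add: eq_neg_iff_add_eq_0)
  then have "poly ?h 0 = - (\<Sum>i\<le>?d. u i * m i)"
    using Dn by (simp add: rescaled_poly_def poly_pcompose u_def sum_divide_distrib sum_distrib_left
        power2_eq_square field_simps)
  then show h0: "poly ?h 0 \<in> maxideal v"
    using u m by (auto intro!: maxideal_uminus maxideal_sum maxideal_mult)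
  have "coeff ?h j \<in> valring v" if j2: "j \<ge> 2" for j
  proof -
    obtain k where "j = 2 + k"
      using le_Suc_ex[OF j2] by blast
    then have "n ^ j = n ^ (j - 2) * n * n"
      by (simp add: power_add power2_eq_square mult_ac)
    then have "coeff ?h j = (\<Sum>i\<le>?d. coeff f i * t ^ i * of_nat (i choose j)) * (n / ?D) * n ^ (j - 2)"
      using Dn by (simp add: coeff_rescaled_poly field_simps)
    also have "\<dots> = (\<Sum>i\<le>?d. u i * of_nat (i choose j) * n ^ (j - 2))"
      unfolding sum_distrib_right u_def by (intro sum.cong) (simp_all add: field_simps)
    finally show ?thesis
      using u assms(4) by (auto intro!: valring_sum valring_mult of_nat_in_valring valring_power)
  qed
  moreover have "coeff ?h 0 \<in> valring v"
    using h0 by (simp add: poly_0_coeff_0 maxideal_subset_valring)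
  moreover have "coeff ?h 1 \<in> valring v"
    unfolding coeff_rescaled_poly_1[OF Dn] by simp
  ultimately show "\<forall>j. coeff ?h j \<in> valring v"
    by (metis One_nat_def less_2_cases not_le)
qed

lemma unique_root_near_approx_root:
  assumes "henselian v" "f \<noteq> 0" "t \<noteq> 0" "n \<noteq> 0" "n \<in> valring v"
    and m: "\<forall>i\<le>degree f. m i \<in> maxideal v"
    and approx_root: "(\<Sum>i\<le>degree f. coeff f i * t ^ i * (1 + n\<^sup>2 * m i)) = 0"
    and pderiv_bound: "\<forall>i\<in>{1..degree f}.
      vord v (poly (pderiv f) t) \<le> vord v (coeff f i * t ^ (i - 1)) + vord v n"
  shows "\<exists>!z. z \<in> maxideal v \<and> poly f (t * (1 + n * z)) = 0"
proof -
  have Dn: "t * poly (pderiv f) t * n \<noteq> 0"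
    using approx_root_weights_in_valring(1)[OF assms(2-8)] assms(3,4) by simp
  have "coeff (rescaled_poly f t n) 1 \<notin> maxideal v"
    unfolding coeff_rescaled_poly_1[OF Dn] by simp
  with rescaled_poly_hensel_conditions[OF assms(2-8)]
  have "\<exists>!z. z \<in> maxideal v \<and> poly (rescaled_poly f t n) z = 0"
    by (intro henselian_unique_root_in_maxideal[OF assms(1)])
  then show ?thesis
    by (simp add: poly_rescaled_poly_eq_0_iff[OF Dn])
qed

lemma pderiv_bound_of_rv_bound:
  assumes "\<forall>\<eta> \<in> rv_sum v N {1..degree f}
            (\<lambda>i. rv_mul (rv v N (of_nat i * coeff f i)) (rv_pow v N (rv v N t) (i - 1))).
          rv_ord v \<eta> \<le>
            Min ({rv_ord v (rv_mul (rv v N (coeff f i)) (rv_pow v N (rv v N t) (i - 1))) | i. 1 \<le> i \<and> i \<le> degree f}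
                 \<union> {Pinf}) + vord v (of_nat N)"
  shows "\<forall>i\<in>{1..degree f}.
    vord v (poly (pderiv f) t) \<le> vord v (coeff f i * t ^ (i - 1)) + vord v (of_nat N)"
proof
  fix i
  assume i: "i \<in> {1..degree f}"
  let ?A = "{vord v (coeff f i * t ^ (i - 1)) | i. 1 \<le> i \<and> i \<le> degree f}"
  have "rv v N (poly (pderiv f) t) \<in> rv_sum v N {1..degree f}
      (\<lambda>i. rv_mul (rv v N (of_nat i * coeff f i)) (rv_pow v N (rv v N t) (i - 1)))"
    using rv_sum_memI[where I = "{1..degree f}" and c = "\<lambda>i. of_nat i * coeff f i * t ^ (i - 1)"]
    by (simp add: rv_pow_rv rv_mul_rv poly_pderiv_altdef)
  with assms have "rv_ord v (rv v N (poly (pderiv f) t)) \<le>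
      Min ({rv_ord v (rv_mul (rv v N (coeff f i)) (rv_pow v N (rv v N t) (i - 1))) | i. 1 \<le> i \<and> i \<le> degree f}
        \<union> {Pinf}) + vord v (of_nat N)"
    by blast
  then have "vord v (poly (pderiv f) t) \<le> Min (?A \<union> {Pinf}) + vord v (of_nat N)"
    by (simp add: rv_pow_rv rv_mul_rv rv_ord_rv)
  also have "Min (?A \<union> {Pinf}) \<le> vord v (coeff f i * t ^ (i - 1))"
  proof (rule Min_le)
    have "?A = (\<lambda>i. vord v (coeff f i * t ^ (i - 1))) ` {1..degree f}"
      by auto
    then show "finite (?A \<union> {Pinf})"
      by simp
  qed (use i in auto)
  then have "Min (?A \<union> {Pinf}) + vord v (of_nat N) \<le> vord v (coeff f i * t ^ (i - 1)) + vord v (of_nat N)"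
    by (rule add_right_mono)
  finally show "vord v (poly (pderiv f) t) \<le> vord v (coeff f i * t ^ (i - 1)) + vord v (of_nat N)" .
qed

lemma unique_root_in_rv_class:
  assumes "henselian v" "f \<noteq> 0" "t \<noteq> 0"
    and m: "\<forall>i\<le>degree f. m i \<in> maxideal v"
    and approx_root: "(\<Sum>i\<le>degree f. coeff f i * t ^ i * (1 + of_nat N ^ 2 * m i)) = 0"
    and pderiv_bound: "\<forall>i\<in>{1..degree f}.
      vord v (poly (pderiv f) t) \<le> vord v (coeff f i * t ^ (i - 1)) + vord v (of_nat N)"
  shows "\<exists>!x. rv v N x = rv v N t \<and> poly f x = 0"
proof (cases "of_nat N = (0::'a)")
  case True
  then have "poly f t = 0"
    using approx_root by (simp add: poly_altdef)
  moreover have "rv v N x = rv v N t \<longleftrightarrow> x = t" for x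
    using True by (simp add: rv_of_nat_eq_0)
  ultimately show ?thesis
    by (intro ex1I[of _ t]) auto
next
  case False
  have "\<exists>!z. z \<in> maxideal v \<and> poly f (t * (1 + of_nat N * z)) = 0"
    using unique_root_near_approx_root[OF assms(1-3) False of_nat_in_valring m approx_root pderiv_bound] .
  then show ?thesis
    unfolding rv_eq_rv_iff by blast
qed

end

theorem lemma2p8:
  fixes v :: "'a::field \<Rightarrow> 'g::linordered_ab_group_add"
    and f :: "'a poly" and N :: nat and \<xi> :: "'a set"
  assumes "henselian_valued_field v"
    and "f \<noteq> 0"
    and "N > 0"
    and "\<xi> \<in> RVx v N"
    and "\<forall>\<eta> \<in> rv_sum v N {1..degree f}
            (\<lambda>i. rv_mul (rv v N (of_nat i * coeff f i)) (rv_pow v N \<xi> (i - 1))).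
          rv_ord v \<eta> \<le>
            Min ({rv_ord v (rv_mul (rv v N (coeff f i)) (rv_pow v N \<xi> (i - 1))) | i. 1 \<le> i \<and> i \<le> degree f}
                 \<union> {Pinf}) + vord v (of_nat N)"
    and "\<exists>\<xi>' \<in> RV v (N^2). rv_res v N \<xi>' = \<xi> \<and>
          {0} \<in> rv_sum v (N^2) {0..degree f}
                  (\<lambda>i. rv_mul (rv v (N^2) (coeff f i)) (rv_pow v (N^2) \<xi>' i))"
  shows "\<exists>!x0. rv v N x0 = \<xi> \<and> poly f x0 = 0"
proof -
  interpret valued_field v
    using assms(1) by unfold_locales (simp add: henselian_valued_field_def)
  obtain t where "rv_res v N (rv v (N^2) t) = \<xi>"
    and zero_sum: "{0} \<in> rv_sum v (N^2) {..degree f} (\<lambda>i. rv v (N^2) (coeff f i * t ^ i))"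
    using assms(6) by (auto simp: RV_def rv_pow_rv rv_mul_rv atLeast0AtMost)
  then have \<xi>: "\<xi> = rv v N t"
    by (simp add: rv_res_rv)
  then have "t \<noteq> 0"
    using assms(4) by (auto simp: RVx_def rv_eq_0_iff)
  obtain m where "\<forall>i\<in>{..degree f}. m i \<in> maxideal v"
    and "(\<Sum>i\<le>degree f. coeff f i * t ^ i * (1 + of_nat (N^2) * m i)) = 0"
    by (rule zero_in_rv_sum_rv[OF zero_sum])
  then have m: "\<forall>i\<le>degree f. m i \<in> maxideal v"
    and approx_root: "(\<Sum>i\<le>degree f. coeff f i * t ^ i * (1 + of_nat N ^ 2 * m i)) = 0"
    by (auto simp: of_nat_power)
  have pderiv_bound: "\<forall>i\<in>{1..degree f}.
      vord v (poly (pderiv f) t) \<le> vord v (coeff f i * t ^ (i - 1)) + vord v (of_nat N)"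
    using assms(5) unfolding \<xi> by (rule pderiv_bound_of_rv_bound)
  have "henselian v"
    using assms(1) by (simp add: henselian_valued_field_def)
  from unique_root_in_rv_class[OF this assms(2) \<open>t \<noteq> 0\<close> m approx_root pderiv_bound]
  show ?thesis
    by (simp add: \<xi>)
qed

end
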